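(* The class of locally strongly sober spaces is projective, and so is the class of strongly sober spaces. That is: if $(p_{ij}\colon X_j\to X_i)_{i\sqsubseteq j\in I}$ is a projective system of topological spaces in which every $X_i$ is locally strongly sober (resp. strongly sober), then every projective limit of this system, taken in the category of topological spaces and continuous maps, is locally strongly sober (resp. strongly sober).
   Context: A projective system of topological spaces consists of a directed preordered set $(I,\sqsubseteq)$ (non-empty, any two elements have an upper bound), topological spaces $X_i$ ($i\in I$) and continuous maps $p_{ij}\colon X_j\to X_i$ for $i\sqsubseteq j$ with $p_{ii}=\mathrm{id}$ and $p_{ij}\circ p_{jk}=p_{ik}$. Its projective limit is its categorical limit in the category of topological spaces; canonically it is the subspace $\{\vec x\in\prod_{i\in I}X_i \mid p_{ij}(x_j)=x_i \text{ for all } i\sqsubseteq j\}$ of the product, with the coordinate projections. A class of spaces is projective if projective limits of projective systems of spaces in the class are in the class. The specialization preorder of a space is $x\le y$ iff every open neighbourhood of $x$ contains $y$; $\downarrow x$ denotes the set of points below $x$ (the closure of $\{x\}$). A space $X$ is locally strongly sober if for every convergent ultrafilter $\mathcal U$ on $X$, the set $\lim\mathcal U$ of its limits equals $\downarrow x$ for a unique point $x$; it is strongly sober if this holds for every ultrafilter $\mathcal U$ on $X$ (equivalently, $X$ is locally strongly sober and compact). Compactness assumes no separation axiom. *)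

theory Defs
  imports "HOL-Analysis.Analysis"
begin

text \<open>An ultrafilter on the set S, represented as a filter on the ambient type
  that contains S: proper, contains S, and for every subset either it or its
  complement belongs to the filter.\<close>
definition ultrafilter_on :: "'a set \<Rightarrow> 'a filter \<Rightarrow> bool" where
  "ultrafilter_on S F \<longleftrightarrow> F \<noteq> bot \<and> eventually (\<lambda>x. x \<in> S) F \<and>
     (\<forall>P. eventually P F \<or> eventually (\<lambda>x. \<not> P x) F)"

definition lims :: "'a topology \<Rightarrow> 'a filter \<Rightarrow> 'a set" where
  "lims X F = {x. limitin X id x F}"

definition spec_le :: "'a topology \<Rightarrow> 'a \<Rightarrow> 'a \<Rightarrow> bool" where
  "spec_le X x y \<longleftrightarrow> x \<in> topspace X \<and> y \<in> topspace X \<and>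
     (\<forall>U. openin X U \<and> x \<in> U \<longrightarrow> y \<in> U)"

definition down :: "'a topology \<Rightarrow> 'a \<Rightarrow> 'a set" where
  "down X x = {y. spec_le X y x}"

definition locally_strongly_sober :: "'a topology \<Rightarrow> bool" where
  "locally_strongly_sober X \<longleftrightarrow>
     (\<forall>U. ultrafilter_on (topspace X) U \<and> lims X U \<noteq> {} \<longrightarrow>
        (\<exists>!x. x \<in> topspace X \<and> lims X U = down X x))"

definition strongly_sober :: "'a topology \<Rightarrow> bool" where
  "strongly_sober X \<longleftrightarrow>
     (\<forall>U. ultrafilter_on (topspace X) U \<longrightarrow>
        (\<exists>!x. x \<in> topspace X \<and> lims X U = down X x))"

definition projective_system ::
  "'i set \<Rightarrow> ('i \<Rightarrow> 'i \<Rightarrow> bool) \<Rightarrow> ('i \<Rightarrow> 'a topology) \<Rightarrow> ('i \<Rightarrow> 'i \<Rightarrow> 'a \<Rightarrow> 'a) \<Rightarrow> bool" where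
  "projective_system I le X p \<longleftrightarrow>
     I \<noteq> {} \<and>
     (\<forall>i\<in>I. le i i) \<and>
     (\<forall>i\<in>I. \<forall>j\<in>I. \<forall>k\<in>I. le i j \<and> le j k \<longrightarrow> le i k) \<and>
     (\<forall>i\<in>I. \<forall>j\<in>I. \<exists>k\<in>I. le i k \<and> le j k) \<and>
     (\<forall>i\<in>I. \<forall>j\<in>I. le i j \<longrightarrow> continuous_map (X j) (X i) (p i j)) \<and>
     (\<forall>i\<in>I. \<forall>x\<in>topspace (X i). p i i x = x) \<and>
     (\<forall>i\<in>I. \<forall>j\<in>I. \<forall>k\<in>I. le i j \<and> le j k \<longrightarrow>
        (\<forall>x\<in>topspace (X k). p i j (p j k x) = p i k x))"

definition proj_cone ::
  "'i set \<Rightarrow> ('i \<Rightarrow> 'i \<Rightarrow> bool) \<Rightarrow> ('i \<Rightarrow> 'a topology) \<Rightarrow> ('i \<Rightarrow> 'i \<Rightarrow> 'a \<Rightarrow> 'a)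
    \<Rightarrow> 'b topology \<Rightarrow> ('i \<Rightarrow> 'b \<Rightarrow> 'a) \<Rightarrow> bool" where
  "proj_cone I le X p Z f \<longleftrightarrow>
     (\<forall>i\<in>I. continuous_map Z (X i) (f i)) \<and>
     (\<forall>i\<in>I. \<forall>j\<in>I. le i j \<longrightarrow> (\<forall>z\<in>topspace Z. p i j (f j z) = f i z))"

text \<open>Test cones range over spaces on the carrier type of L, which suffices to characterise
  the limit up to homeomorphism (one-point spaces and the initial topology).\<close>
definition projective_limit ::
  "'i set \<Rightarrow> ('i \<Rightarrow> 'i \<Rightarrow> bool) \<Rightarrow> ('i \<Rightarrow> 'a topology) \<Rightarrow> ('i \<Rightarrow> 'i \<Rightarrow> 'a \<Rightarrow> 'a)
    \<Rightarrow> 'b topology \<Rightarrow> ('i \<Rightarrow> 'b \<Rightarrow> 'a) \<Rightarrow> bool" where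
  "projective_limit I le X p L q \<longleftrightarrow>
     proj_cone I le X p L q \<and>
     (\<forall>(Z::'b topology) f. proj_cone I le X p Z f \<longrightarrow>
        (\<exists>u. continuous_map Z L u \<and> (\<forall>i\<in>I. \<forall>z\<in>topspace Z. q i (u z) = f i z) \<and>
             (\<forall>v. continuous_map Z L v \<and> (\<forall>i\<in>I. \<forall>z\<in>topspace Z. q i (v z) = f i z)
                  \<longrightarrow> (\<forall>z\<in>topspace Z. v z = u z))))"

end

theory Submission
  imports Defs
begin

text \<open>Let U be an ultrafilter on the limit L. Its images in the factors X i have limit sets
  down (a i), and a point z of L is a limit of U iff q i z <= a i for every i; but the a i only
  form a lax thread, p i j (a j) <= a i. In a locally strongly sober space a down-directed set
  with a lower bound (any down-directed set, if the space is strongly sober) has an infimum,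
  namely the point whose down-set is the limit set of an ultrafilter refining the down-sections
  of the set. Hence chains of lax threads have coordinatewise infima, and Zorn's lemma yields a
  minimal lax thread m below a and above all limits of U. Replacing m i by the infimum of the
  p i k (m k), k >= i, cannot make m smaller, so m is a genuine thread, and the corresponding
  point of L is the greatest limit of U.\<close>

lemma spec_le_refl: "x \<in> topspace X \<Longrightarrow> spec_le X x x"
  by (simp add: spec_le_def)

lemma spec_le_trans [trans]: "spec_le X x y \<Longrightarrow> spec_le X y z \<Longrightarrow> spec_le X x z"
  by (simp add: spec_le_def)

lemma spec_le_openin: "spec_le X x y \<Longrightarrow> openin X V \<Longrightarrow> x \<in> V \<Longrightarrow> y \<in> V"
  by (simp add: spec_le_def)

lemma spec_le_continuous_map:
  assumes "continuous_map X Y f" "spec_le X x y"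
  shows "spec_le Y (f x) (f y)"
proof -
  have "f y \<in> V" if "openin Y V" "f x \<in> V" for V
  proof -
    have "openin X {z \<in> topspace X. f z \<in> V}"
      using assms(1) that(1) by (simp add: continuous_map_def)
    with assms(2) that(2) show ?thesis by (auto simp: spec_le_def)
  qed
  with assms show ?thesis by (auto simp: spec_le_def continuous_map_def)
qed

lemma t0_space_iff_spec_le_antisym:
  "t0_space X \<longleftrightarrow> (\<forall>x y. spec_le X x y \<longrightarrow> spec_le X y x \<longrightarrow> x = y)"
proof
  assume "t0_space X"
  then show "\<forall>x y. spec_le X x y \<longrightarrow> spec_le X y x \<longrightarrow> x = y"
    unfolding t0_space_def spec_le_def by (metis (no_types, lifting))
next
  assume "\<forall>x y. spec_le X x y \<longrightarrow> spec_le X y x \<longrightarrow> x = y"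
  then show "t0_space X"
    unfolding t0_space_def spec_le_def by (metis (no_types, lifting))
qed

lemma t0_space_down_eqD:
  assumes "t0_space X" "x \<in> topspace X" "y \<in> topspace X" "down X x = down X y"
  shows "x = y"
proof -
  have "spec_le X x y" "spec_le X y x"
    using assms(2-4) spec_le_refl[of x X] spec_le_refl[of y X] by (auto simp: down_def)
  with assms(1) show ?thesis
    unfolding t0_space_iff_spec_le_antisym by blast
qed

lemma in_lims_iff:
  "x \<in> lims X F \<longleftrightarrow> x \<in> topspace X \<and> (\<forall>V. openin X V \<and> x \<in> V \<longrightarrow> eventually (\<lambda>y. y \<in> V) F)"
  by (simp add: lims_def limitin_def)

lemma lims_filtermap_continuous_map:
  assumes "continuous_map X Y f" "x \<in> lims X F"
  shows "f x \<in> lims Y (filtermap f F)"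
  using continuous_map_limit[OF assms(1)] assms(2)
  by (simp add: lims_def limitin_def eventually_filtermap)

lemma ultrafilter_on_principal: "x \<in> S \<Longrightarrow> ultrafilter_on S (principal {x})"
  by (auto simp: ultrafilter_on_def eventually_principal principal_eq_bot_iff)

lemma ultrafilter_on_filtermap:
  assumes "ultrafilter_on S U" "\<forall>\<^sub>F x in U. f x \<in> T"
  shows "ultrafilter_on T (filtermap f U)"
  using assms by (simp add: ultrafilter_on_def eventually_filtermap filtermap_bot_iff)

lemma lims_principal: "x \<in> topspace X \<Longrightarrow> lims X (principal {x}) = down X x"
  by (auto simp: in_lims_iff eventually_principal down_def spec_le_def)

lemma exists_ultrafilter_le:
  fixes F :: "'a filter"
  assumes "F \<noteq> bot"
  shows "\<exists>U\<le>F. U \<noteq> bot \<and> (\<forall>P. eventually P U \<or> eventually (\<lambda>x. \<not> P x) U)"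
proof -
  define D where "D = {G. G \<noteq> bot \<and> G \<le> F}"
  have "\<exists>m\<in>D. \<forall>G\<in>D. G \<le> m \<longrightarrow> G = m"
  proof (rule predicate_Zorn)
    show "partial_order_on D (relation_of (\<ge>) D)"
      by (rule partial_order_on_relation_ofI) auto
  next
    fix C assume C: "C \<in> Chains (relation_of (\<ge>) D)"
    show "\<exists>u\<in>D. \<forall>G\<in>C. u \<le> G"
    proof (cases "C = {}")
      case True
      then show ?thesis using assms by (auto simp: D_def)
    next
      case False
      have CD: "C \<subseteq> D" and total: "\<And>G H. G \<in> C \<Longrightarrow> H \<in> C \<Longrightarrow> G \<le> H \<or> H \<le> G"
        using C by (auto simp: Chains_def relation_of_def)
      have "eventually P (Inf C) \<longleftrightarrow> (\<exists>G\<in>C. eventually P G)" for P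
        by (rule eventually_Inf_base[OF False]) (metis total inf_absorb1 inf_absorb2)
      then have "Inf C \<noteq> bot"
        using CD by (auto simp: D_def trivial_limit_def)
      moreover obtain G where "G \<in> C" using False by blast
      then have "Inf C \<le> F"
        using CD by (auto simp: D_def intro: Inf_lower2)
      ultimately show ?thesis
        by (auto simp: D_def intro: Inf_lower)
    qed
  qed
  then obtain U where U: "U \<noteq> bot" "U \<le> F" and max: "\<And>G. G \<noteq> bot \<Longrightarrow> G \<le> U \<Longrightarrow> G = U"
    by (auto simp: D_def)
  have "eventually P U \<or> eventually (\<lambda>x. \<not> P x) U" for P
  proof (rule disjCI)
    assume "\<not> eventually (\<lambda>x. \<not> P x) U"
    then have "inf U (principal {x. P x}) = U"
      by (intro max) (auto simp: trivial_limit_def eventually_inf_principal)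
    moreover have "eventually P (inf U (principal {x. P x}))"
      by (simp add: eventually_inf_principal)
    ultimately show "eventually P U" by simp
  qed
  with U show ?thesis by (intro exI[of _ U]) simp
qed

definition lower_bounds :: "'a topology \<Rightarrow> 'a set \<Rightarrow> 'a set" where
  "lower_bounds X S = {y \<in> topspace X. \<forall>s\<in>S. spec_le X y s}"

definition down_directed :: "'a topology \<Rightarrow> 'a set \<Rightarrow> bool" where
  "down_directed X S \<longleftrightarrow> (\<forall>s\<in>S. \<forall>t\<in>S. \<exists>r\<in>S. spec_le X r s \<and> spec_le X r t)"

definition has_filtered_infs_above :: "'a topology \<Rightarrow> 'a set \<Rightarrow> bool" where
  "has_filtered_infs_above X A \<longleftrightarrow>
     (\<forall>S. S \<subseteq> topspace X \<and> S \<noteq> {} \<and> down_directed X S \<and> A \<subseteq> lower_bounds X S \<longrightarrow>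
        (\<exists>w\<in>topspace X. down X w = lower_bounds X S))"

lemma spec_le_glb_iff:
  assumes "down X w = lower_bounds X S"
  shows "spec_le X y w \<longleftrightarrow> y \<in> topspace X \<and> (\<forall>s\<in>S. spec_le X y s)"
  using assms unfolding down_def lower_bounds_def set_eq_iff by blast

lemma glb_spec_le:
  assumes "down X w = lower_bounds X S" "w \<in> topspace X" "s \<in> S"
  shows "spec_le X w s"
  using spec_le_glb_iff[OF assms(1)] spec_le_refl[OF assms(2)] assms(3) by blast

lemma exists_ultrafilter_lims_eq_lower_bounds:
  assumes S: "S \<subseteq> topspace X" "S \<noteq> {}" "down_directed X S"
  shows "\<exists>U. ultrafilter_on (topspace X) U \<and> lims X U = lower_bounds X S"
proof -
  define F where "F = (INF s\<in>S. principal (S \<inter> down X s))"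
  have evF: "eventually P F \<longleftrightarrow> (\<exists>s\<in>S. \<forall>x\<in>S \<inter> down X s. P x)" for P
    unfolding F_def eventually_principal[symmetric]
  proof (rule eventually_INF_base[OF S(2)])
    fix a b assume "a \<in> S" "b \<in> S"
    then obtain r where "r \<in> S" "spec_le X r a" "spec_le X r b"
      using S(3) by (auto simp: down_directed_def)
    then show "\<exists>r\<in>S. principal (S \<inter> down X r) \<le> inf (principal (S \<inter> down X a)) (principal (S \<inter> down X b))"
      by (auto simp: down_def intro: spec_le_trans)
  qed
  have "F \<noteq> bot"
    using evF[of "\<lambda>_. False"] S(1) by (auto simp: trivial_limit_def down_def intro: spec_le_refl)
  then obtain U where U: "U \<le> F" "U \<noteq> bot" "\<forall>P. eventually P U \<or> eventually (\<lambda>x. \<not> P x) U"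
    using exists_ultrafilter_le by blast
  have U_S: "eventually (\<lambda>x. x \<in> S) U"
    using S(2) by (intro filter_leD[OF U(1)]) (auto simp: evF)
  have U_below: "eventually (\<lambda>x. spec_le X x s) U" if "s \<in> S" for s
    using that by (intro filter_leD[OF U(1)]) (auto simp: evF down_def)
  have "ultrafilter_on (topspace X) U"
    using U(2,3) eventually_mono[OF U_S, of "\<lambda>x. x \<in> topspace X"] S(1)
    by (auto simp: ultrafilter_on_def)
  moreover have "lims X U = lower_bounds X S"
  proof (intro set_eqI iffI)
    fix y assume y: "y \<in> lims X U"
    have "spec_le X y s" if "s \<in> S" for s
    proof -
      have "s \<in> V" if "openin X V" "y \<in> V" for V
      proof -
        have "eventually (\<lambda>x. x \<in> V \<and> spec_le X x s) U"
          using y that \<open>s \<in> S\<close> U_below by (auto simp: in_lims_iff intro: eventually_conj)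
        then obtain x where "x \<in> V" "spec_le X x s"
          using eventually_happens'[OF U(2)] by blast
        then show ?thesis using spec_le_openin \<open>openin X V\<close> by metis
      qed
      then show ?thesis using y that S(1) by (auto simp: spec_le_def in_lims_iff)
    qed
    then show "y \<in> lower_bounds X S" using y by (simp add: lower_bounds_def in_lims_iff)
  next
    fix y assume y: "y \<in> lower_bounds X S"
    have "eventually (\<lambda>x. x \<in> V) U" if "openin X V" "y \<in> V" for V
      using U_S by (rule eventually_mono) (use y that in \<open>auto simp: lower_bounds_def spec_le_def\<close>)
    then show "y \<in> lims X U" using y by (simp add: lower_bounds_def in_lims_iff)
  qed
  ultimately show ?thesis by blast
qed

lemma strongly_sober_imp_locally_strongly_sober:
  "strongly_sober X \<Longrightarrow> locally_strongly_sober X"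
  by (auto simp: strongly_sober_def locally_strongly_sober_def)

lemma locally_strongly_sober_imp_t0_space:
  assumes "locally_strongly_sober X"
  shows "t0_space X"
  unfolding t0_space_iff_spec_le_antisym
proof (intro allI impI)
  fix x y assume xy: "spec_le X x y" "spec_le X y x"
  then have x: "x \<in> topspace X" and y: "y \<in> topspace X" by (simp_all add: spec_le_def)
  have "lims X (principal {x}) \<noteq> {}"
    using x spec_le_refl[OF x] by (auto simp: lims_principal down_def)
  then have "\<exists>!w. w \<in> topspace X \<and> lims X (principal {x}) = down X w"
    using assms ultrafilter_on_principal[OF x] by (simp add: locally_strongly_sober_def)
  moreover have "down X x = down X y"
    using xy by (auto simp: down_def intro: spec_le_trans)
  ultimately show "x = y"
    using x y by (simp add: lims_principal) blast
qed

lemma locally_strongly_sober_has_filtered_infs_above: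
  assumes "locally_strongly_sober X" "A \<noteq> {}"
  shows "has_filtered_infs_above X A"
  unfolding has_filtered_infs_above_def
proof (intro allI impI, elim conjE)
  fix S assume S: "S \<subseteq> topspace X" "S \<noteq> {}" "down_directed X S" "A \<subseteq> lower_bounds X S"
  obtain U where "ultrafilter_on (topspace X) U" "lims X U = lower_bounds X S"
    using exists_ultrafilter_lims_eq_lower_bounds[OF S(1-3)] by blast
  with assms S(4) show "\<exists>w\<in>topspace X. down X w = lower_bounds X S"
    unfolding locally_strongly_sober_def by force
qed

lemma strongly_sober_has_filtered_infs_above:
  assumes "strongly_sober X"
  shows "has_filtered_infs_above X A"
  unfolding has_filtered_infs_above_def
proof (intro allI impI, elim conjE)
  fix S assume S: "S \<subseteq> topspace X" "S \<noteq> {}" "down_directed X S"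
  obtain U where "ultrafilter_on (topspace X) U" "lims X U = lower_bounds X S"
    using exists_ultrafilter_lims_eq_lower_bounds[OF S] by blast
  with assms show "\<exists>w\<in>topspace X. down X w = lower_bounds X S"
    unfolding strongly_sober_def by force
qed

locale proj_system =
  fixes I :: "'i set" and le :: "'i \<Rightarrow> 'i \<Rightarrow> bool"
    and X :: "'i \<Rightarrow> 'a topology" and p :: "'i \<Rightarrow> 'i \<Rightarrow> 'a \<Rightarrow> 'a"
  assumes system: "projective_system I le X p"
begin

lemma index_nonempty: "I \<noteq> {}"
  using system by (simp add: projective_system_def)

lemma le_refl: "i \<in> I \<Longrightarrow> le i i"
  using system by (simp add: projective_system_def)

lemma le_trans: "\<lbrakk>i \<in> I; j \<in> I; k \<in> I; le i j; le j k\<rbrakk> \<Longrightarrow> le i k"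
  using system unfolding projective_system_def by blast

lemma directed: "\<lbrakk>i \<in> I; j \<in> I\<rbrakk> \<Longrightarrow> \<exists>k\<in>I. le i k \<and> le j k"
  using system unfolding projective_system_def by blast

lemma continuous_map_bond: "\<lbrakk>i \<in> I; j \<in> I; le i j\<rbrakk> \<Longrightarrow> continuous_map (X j) (X i) (p i j)"
  using system unfolding projective_system_def by blast

lemma bond_in_topspace: "\<lbrakk>i \<in> I; j \<in> I; le i j; x \<in> topspace (X j)\<rbrakk> \<Longrightarrow> p i j x \<in> topspace (X i)"
  using continuous_map_image_subset_topspace[OF continuous_map_bond] by blast

lemma bond_id: "\<lbrakk>i \<in> I; x \<in> topspace (X i)\<rbrakk> \<Longrightarrow> p i i x = x"
  using system unfolding projective_system_def by blast

lemma bond_comp: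
  "\<lbrakk>i \<in> I; j \<in> I; k \<in> I; le i j; le j k; x \<in> topspace (X k)\<rbrakk> \<Longrightarrow> p i j (p j k x) = p i k x"
  using system unfolding projective_system_def by blast

definition thread :: "('i \<Rightarrow> 'a) \<Rightarrow> bool" where
  "thread c \<longleftrightarrow> (\<forall>i\<in>I. c i \<in> topspace (X i)) \<and> (\<forall>i\<in>I. \<forall>j\<in>I. le i j \<longrightarrow> p i j (c j) = c i)"

definition lax_thread :: "('i \<Rightarrow> 'a) \<Rightarrow> bool" where
  "lax_thread c \<longleftrightarrow>
     (\<forall>i\<in>I. c i \<in> topspace (X i)) \<and> (\<forall>i\<in>I. \<forall>j\<in>I. le i j \<longrightarrow> spec_le (X i) (p i j (c j)) (c i))"

definition coord_le :: "('i \<Rightarrow> 'a) \<Rightarrow> ('i \<Rightarrow> 'a) \<Rightarrow> bool" where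
  "coord_le c d \<longleftrightarrow> (\<forall>i\<in>I. spec_le (X i) (c i) (d i))"

lemma coord_le_refl: "\<forall>i\<in>I. c i \<in> topspace (X i) \<Longrightarrow> coord_le c c"
  by (simp add: coord_le_def spec_le_refl)

lemma coord_le_trans: "coord_le c d \<Longrightarrow> coord_le d e \<Longrightarrow> coord_le c e"
  unfolding coord_le_def by (auto intro: spec_le_trans)

lemma lax_thread_coordwise_inf:
  assumes C: "\<forall>c\<in>C. lax_thread c" "C \<noteq> {}"
    and w: "\<forall>i\<in>I. w i \<in> topspace (X i) \<and> down (X i) (w i) = lower_bounds (X i) ((\<lambda>c. c i) ` C)"
  shows "lax_thread w"
  unfolding lax_thread_def
proof (intro conjI ballI impI)
  fix i j assume ij: "i \<in> I" "j \<in> I" "le i j"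
  have "spec_le (X i) (p i j (w j)) (c i)" if "c \<in> C" for c
  proof -
    have "spec_le (X j) (w j) (c j)"
      using w ij(2) that by (intro glb_spec_le[of "X j" "w j" "(\<lambda>c. c j) ` C"]) auto
    then have "spec_le (X i) (p i j (w j)) (p i j (c j))"
      by (rule spec_le_continuous_map[OF continuous_map_bond[OF ij]])
    also have "spec_le (X i) (p i j (c j)) (c i)"
      using C(1) that ij by (simp add: lax_thread_def)
    finally show ?thesis .
  qed
  moreover have "p i j (w j) \<in> topspace (X i)"
    using w ij by (simp add: bond_in_topspace)
  ultimately show "spec_le (X i) (p i j (w j)) (w i)"
    using w ij(1) by (simp add: spec_le_glb_iff)
qed (use w in blast)

lemma lax_thread_bond_antitone:
  assumes "lax_thread m" "i \<in> I" "k \<in> I" "k' \<in> I" "le i k" "le k k'"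
  shows "spec_le (X i) (p i k' (m k')) (p i k (m k))"
proof -
  have "spec_le (X i) (p i k (p k k' (m k'))) (p i k (m k))"
    using assms by (intro spec_le_continuous_map[OF continuous_map_bond]) (auto simp: lax_thread_def)
  then show ?thesis
    using assms by (simp add: bond_comp lax_thread_def)
qed

lemma down_directed_bond_images:
  assumes "lax_thread m" "i \<in> I"
  shows "down_directed (X i) ((\<lambda>k. p i k (m k)) ` {k\<in>I. le i k})"
  unfolding down_directed_def
proof (intro ballI)
  fix s t assume "s \<in> (\<lambda>k. p i k (m k)) ` {k\<in>I. le i k}" "t \<in> (\<lambda>k. p i k (m k)) ` {k\<in>I. le i k}"
  then obtain k l where kl: "k \<in> I" "le i k" "s = p i k (m k)" "l \<in> I" "le i l" "t = p i l (m l)"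
    by blast
  obtain k' where k': "k' \<in> I" "le k k'" "le l k'"
    using directed[OF kl(1,4)] by blast
  have "le i k'"
    using le_trans assms(2) kl k' by blast
  then show "\<exists>r\<in>(\<lambda>k. p i k (m k)) ` {k\<in>I. le i k}. spec_le (X i) r s \<and> spec_le (X i) r t"
    using lax_thread_bond_antitone[OF assms] kl k' by blast
qed

lemma lax_thread_tighten:
  assumes m: "lax_thread m"
    and w: "\<forall>i\<in>I. w i \<in> topspace (X i) \<and>
              down (X i) (w i) = lower_bounds (X i) ((\<lambda>k. p i k (m k)) ` {k\<in>I. le i k})"
  shows "lax_thread w" "coord_le w m"
proof -
  have w_le: "spec_le (X i) (w i) (p i k (m k))" if "i \<in> I" "k \<in> I" "le i k" for i k
    using w that by (intro glb_spec_le[of "X i" "w i"]) auto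
  show "coord_le w m"
    unfolding coord_le_def
  proof
    fix i assume "i \<in> I"
    then show "spec_le (X i) (w i) (m i)"
      using w_le[of i i] le_refl m by (simp add: bond_id lax_thread_def)
  qed
  show "lax_thread w"
    unfolding lax_thread_def
  proof (intro conjI ballI impI)
    fix i j assume ij: "i \<in> I" "j \<in> I" "le i j"
    have "spec_le (X i) (p i j (w j)) (p i k (m k))" if k: "k \<in> I" "le i k" for k
    proof -
      obtain k' where k': "k' \<in> I" "le j k'" "le k k'"
        using directed[OF ij(2) k(1)] by blast
      have "spec_le (X i) (p i j (w j)) (p i j (p j k' (m k')))"
        using w_le ij k' by (intro spec_le_continuous_map[OF continuous_map_bond]) auto
      also have "p i j (p j k' (m k')) = p i k' (m k')"
        using ij k' m by (simp add: bond_comp lax_thread_def)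
      also have "spec_le (X i) \<dots> (p i k (m k))"
        using lax_thread_bond_antitone[OF m ij(1) k(1) k'(1) k(2) k'(3)] .
      finally show ?thesis .
    qed
    moreover have "p i j (w j) \<in> topspace (X i)"
      using w ij by (simp add: bond_in_topspace)
    ultimately show "spec_le (X i) (p i j (w j)) (w i)"
      using w ij(1) by (simp add: spec_le_glb_iff)
  qed (use w in blast)
qed

text \<open>Requiring extensional I makes the coordinatewise order antisymmetric,
  as Zorn's lemma requires.\<close>
definition lax_threads_between :: "('i \<Rightarrow> 'a) \<Rightarrow> ('i \<Rightarrow> 'a) set \<Rightarrow> ('i \<Rightarrow> 'a) set" where
  "lax_threads_between a B = {c \<in> extensional I. lax_thread c \<and> coord_le c a \<and> (\<forall>b\<in>B. coord_le b c)}"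

lemma exists_coordwise_glb:
  assumes infs: "\<forall>i\<in>I. has_filtered_infs_above (X i) ((\<lambda>b. b i) ` B)"
    and S: "\<forall>i\<in>I. S i \<subseteq> topspace (X i) \<and> S i \<noteq> {} \<and> down_directed (X i) (S i) \<and>
                 (\<forall>b\<in>B. \<forall>s\<in>S i. spec_le (X i) (b i) s)"
  shows "\<exists>w\<in>extensional I. \<forall>i\<in>I. w i \<in> topspace (X i) \<and> down (X i) (w i) = lower_bounds (X i) (S i)"
proof -
  have "\<forall>i\<in>I. \<exists>w\<in>topspace (X i). down (X i) w = lower_bounds (X i) (S i)"
  proof
    fix i assume i: "i \<in> I"
    have "(\<lambda>b. b i) ` B \<subseteq> lower_bounds (X i) (S i)"
      using S i by (auto simp: lower_bounds_def spec_le_def)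
    then show "\<exists>w\<in>topspace (X i). down (X i) w = lower_bounds (X i) (S i)"
      using infs[rule_format, OF i] S[rule_format, OF i]
      unfolding has_filtered_infs_above_def by simp
  qed
  then obtain w where "\<forall>i\<in>I. w i \<in> topspace (X i) \<and> down (X i) (w i) = lower_bounds (X i) (S i)"
    by metis
  then show ?thesis
    by (intro bexI[of _ "restrict w I"]) auto
qed

lemma lax_threads_between_chain_bound:
  assumes infs: "\<forall>i\<in>I. has_filtered_infs_above (X i) ((\<lambda>b. b i) ` B)"
    and C: "C \<subseteq> lax_threads_between a B" "C \<noteq> {}"
    and chain: "\<forall>c\<in>C. \<forall>d\<in>C. coord_le c d \<or> coord_le d c"
  shows "\<exists>u\<in>lax_threads_between a B. \<forall>c\<in>C. coord_le u c"
proof -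
  have "\<forall>i\<in>I. (\<lambda>c. c i) ` C \<subseteq> topspace (X i) \<and> (\<lambda>c. c i) ` C \<noteq> {} \<and>
          down_directed (X i) ((\<lambda>c. c i) ` C) \<and> (\<forall>b\<in>B. \<forall>s\<in>(\<lambda>c. c i) ` C. spec_le (X i) (b i) s)"
    using C chain
    by (auto simp: lax_threads_between_def lax_thread_def coord_le_def down_directed_def) metis
  from exists_coordwise_glb[OF infs this] obtain w where w: "w \<in> extensional I"
    "\<forall>i\<in>I. w i \<in> topspace (X i) \<and> down (X i) (w i) = lower_bounds (X i) ((\<lambda>c. c i) ` C)"
    by (elim bexE)
  have w_le: "coord_le w c" if "c \<in> C" for c
    unfolding coord_le_def using w(2) that by (auto intro: glb_spec_le)
  have "lax_thread w"
    using C w(2) by (intro lax_thread_coordwise_inf) (auto simp: lax_threads_between_def)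
  moreover obtain c where "c \<in> C" using C(2) by blast
  then have "coord_le w a"
    using C(1) w_le by (auto simp: lax_threads_between_def intro: coord_le_trans)
  moreover have "coord_le b w" if "b \<in> B" for b
    unfolding coord_le_def
  proof
    fix i assume i: "i \<in> I"
    have "spec_le (X i) (b i) (c i)" if "c \<in> C" for c
      using that \<open>b \<in> B\<close> C(1) i by (auto simp: lax_threads_between_def coord_le_def)
    moreover have "b i \<in> topspace (X i)"
      using calculation[OF \<open>c \<in> C\<close>] by (simp add: spec_le_def)
    ultimately show "spec_le (X i) (b i) (w i)"
      using w(2) i by (simp add: spec_le_glb_iff)
  qed
  ultimately show ?thesis
    using w(1) w_le by (auto simp: lax_threads_between_def)
qed

lemma lax_threads_between_tighten:
  assumes infs: "\<forall>i\<in>I. has_filtered_infs_above (X i) ((\<lambda>b. b i) ` B)"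
    and B: "\<forall>b\<in>B. thread b"
    and m: "m \<in> lax_threads_between a B"
  shows "\<exists>w\<in>lax_threads_between a B. coord_le w m \<and>
           (\<forall>i\<in>I. \<forall>j\<in>I. le i j \<longrightarrow> spec_le (X i) (w i) (p i j (m j)))"
proof -
  have m_lax: "lax_thread m"
    using m by (simp add: lax_threads_between_def)
  have B_le: "spec_le (X i) (b i) (p i k (m k))" if "b \<in> B" "i \<in> I" "k \<in> I" "le i k" for b i k
  proof -
    have "spec_le (X i) (p i k (b k)) (p i k (m k))"
      using m that by (intro spec_le_continuous_map[OF continuous_map_bond])
                      (auto simp: lax_threads_between_def coord_le_def)
    then show ?thesis
      using B that by (simp add: thread_def)
  qed
  have "\<forall>i\<in>I. (\<lambda>k. p i k (m k)) ` {k\<in>I. le i k} \<subseteq> topspace (X i) \<and>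
          (\<lambda>k. p i k (m k)) ` {k\<in>I. le i k} \<noteq> {} \<and>
          down_directed (X i) ((\<lambda>k. p i k (m k)) ` {k\<in>I. le i k}) \<and>
          (\<forall>b\<in>B. \<forall>s\<in>(\<lambda>k. p i k (m k)) ` {k\<in>I. le i k}. spec_le (X i) (b i) s)"
    using m_lax B_le le_refl down_directed_bond_images
    by (auto simp: lax_thread_def bond_in_topspace)
  from exists_coordwise_glb[OF infs this] obtain w where w: "w \<in> extensional I"
    "\<forall>i\<in>I. w i \<in> topspace (X i) \<and>
       down (X i) (w i) = lower_bounds (X i) ((\<lambda>k. p i k (m k)) ` {k\<in>I. le i k})"
    by (elim bexE)
  have "coord_le w m"
    using lax_thread_tighten(2)[OF m_lax w(2)] .
  moreover have "w \<in> lax_threads_between a B"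
  proof -
    have "coord_le b w" if "b \<in> B" for b
      unfolding coord_le_def
    proof
      fix i assume i: "i \<in> I"
      have "b i \<in> topspace (X i)"
        using B that i by (simp add: thread_def)
      with B_le[OF that i] show "spec_le (X i) (b i) (w i)"
        using w(2) i by (auto simp: spec_le_glb_iff)
    qed
    then show ?thesis
      using lax_thread_tighten(1)[OF m_lax w(2)] w(1) calculation m
      by (auto simp: lax_threads_between_def intro: coord_le_trans)
  qed
  moreover have "spec_le (X i) (w i) (p i j (m j))" if "i \<in> I" "j \<in> I" "le i j" for i j
    using w(2) that by (intro glb_spec_le[of "X i" "w i"]) auto
  ultimately show ?thesis by blast
qed

lemma lax_threads_between_antisym:
  assumes T0: "\<forall>i\<in>I. t0_space (X i)"
    and "c \<in> lax_threads_between a B" "d \<in> lax_threads_between a B" "coord_le c d" "coord_le d c"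
  shows "c = d"
proof (rule extensionalityI)
  show "c \<in> extensional I" "d \<in> extensional I"
    using assms(2,3) by (simp_all add: lax_threads_between_def)
  show "c i = d i" if "i \<in> I" for i
    using T0 that assms(4,5) by (simp add: coord_le_def t0_space_iff_spec_le_antisym)
qed

lemma exists_minimal_lax_thread_between:
  assumes T0: "\<forall>i\<in>I. t0_space (X i)"
    and a: "lax_thread a"
    and B: "\<forall>b\<in>B. coord_le b a"
    and infs: "\<forall>i\<in>I. has_filtered_infs_above (X i) ((\<lambda>b. b i) ` B)"
  shows "\<exists>m\<in>lax_threads_between a B. \<forall>c\<in>lax_threads_between a B. coord_le c m \<longrightarrow> c = m"
proof (rule predicate_Zorn)
  show "partial_order_on (lax_threads_between a B)
          (relation_of (\<lambda>c d. coord_le d c) (lax_threads_between a B))"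
    using lax_threads_between_antisym[OF T0]
    by (intro partial_order_on_relation_ofI)
       (auto simp: lax_threads_between_def lax_thread_def intro: coord_le_refl coord_le_trans)
next
  fix C assume "C \<in> Chains (relation_of (\<lambda>c d. coord_le d c) (lax_threads_between a B))"
  then have C: "C \<subseteq> lax_threads_between a B" "\<forall>c\<in>C. \<forall>d\<in>C. coord_le c d \<or> coord_le d c"
    by (auto simp: Chains_def relation_of_def)
  show "\<exists>u\<in>lax_threads_between a B. \<forall>c\<in>C. coord_le u c"
  proof (cases "C = {}")
    case True
    have "restrict a I \<in> lax_threads_between a B"
      using a B by (auto simp: lax_threads_between_def lax_thread_def coord_le_def spec_le_refl)
    with True show ?thesis by blast
  next
    case False
    with infs C show ?thesis by (intro lax_threads_between_chain_bound)
  qed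
qed

lemma exists_thread_between:
  assumes T0: "\<forall>i\<in>I. t0_space (X i)"
    and a: "lax_thread a"
    and B: "\<forall>b\<in>B. thread b \<and> coord_le b a"
    and infs: "\<forall>i\<in>I. has_filtered_infs_above (X i) ((\<lambda>b. b i) ` B)"
  shows "\<exists>m. thread m \<and> coord_le m a \<and> (\<forall>b\<in>B. coord_le b m)"
proof -
  obtain m where m: "m \<in> lax_threads_between a B"
    and m_min: "\<And>c. c \<in> lax_threads_between a B \<Longrightarrow> coord_le c m \<Longrightarrow> c = m"
    using exists_minimal_lax_thread_between[OF T0 a _ infs] B by blast
  obtain w where w: "w \<in> lax_threads_between a B" "coord_le w m"
      "\<forall>i\<in>I. \<forall>j\<in>I. le i j \<longrightarrow> spec_le (X i) (w i) (p i j (m j))"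
    using lax_threads_between_tighten[OF infs _ m] B by blast
  have "thread m"
    unfolding thread_def
  proof (intro conjI ballI impI)
    fix i j assume ij: "i \<in> I" "j \<in> I" "le i j"
    have "spec_le (X i) (m i) (p i j (m j))"
      using w ij m_min[OF w(1,2)] by simp
    moreover have "spec_le (X i) (p i j (m j)) (m i)"
      using m ij by (simp add: lax_threads_between_def lax_thread_def)
    ultimately show "p i j (m j) = m i"
      using T0 ij(1) by (simp add: t0_space_iff_spec_le_antisym)
  qed (use m in \<open>simp add: lax_threads_between_def lax_thread_def\<close>)
  with m show ?thesis
    by (auto simp: lax_threads_between_def)
qed

end

locale proj_limit = proj_system I le X p
  for I :: "'i set" and le :: "'i \<Rightarrow> 'i \<Rightarrow> bool"
    and X :: "'i \<Rightarrow> 'a topology" and p :: "'i \<Rightarrow> 'i \<Rightarrow> 'a \<Rightarrow> 'a" +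
  fixes L :: "'b topology" and q :: "'i \<Rightarrow> 'b \<Rightarrow> 'a"
  assumes limit: "projective_limit I le X p L q"
begin

lemma continuous_map_proj: "i \<in> I \<Longrightarrow> continuous_map L (X i) (q i)"
  using limit by (simp add: projective_limit_def proj_cone_def)

lemma proj_in_topspace: "\<lbrakk>i \<in> I; z \<in> topspace L\<rbrakk> \<Longrightarrow> q i z \<in> topspace (X i)"
  using continuous_map_image_subset_topspace[OF continuous_map_proj] by blast

lemma bond_proj: "\<lbrakk>i \<in> I; j \<in> I; le i j; z \<in> topspace L\<rbrakk> \<Longrightarrow> p i j (q j z) = q i z"
  using limit by (simp add: projective_limit_def proj_cone_def)

lemma thread_proj: "z \<in> topspace L \<Longrightarrow> thread (\<lambda>i. q i z)"
  by (simp add: thread_def proj_in_topspace bond_proj)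

lemma limit_universal:
  fixes Z :: "'b topology"
  assumes "proj_cone I le X p Z f"
  shows "\<exists>u. continuous_map Z L u \<and> (\<forall>i\<in>I. \<forall>z\<in>topspace Z. q i (u z) = f i z) \<and>
           (\<forall>v. continuous_map Z L v \<and> (\<forall>i\<in>I. \<forall>z\<in>topspace Z. q i (v z) = f i z)
                \<longrightarrow> (\<forall>z\<in>topspace Z. v z = u z))"
  using limit assms unfolding projective_limit_def by blast

lemma proj_eqI:
  assumes z: "z \<in> topspace L" "z' \<in> topspace L" and eq: "\<forall>i\<in>I. q i z = q i z'"
  shows "z = z'"
proof -
  let ?Z = "subtopology L {z}"
  have "proj_cone I le X p ?Z q"
    unfolding proj_cone_def
    using continuous_map_proj bond_proj z by (auto intro: continuous_map_from_subtopology)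
  from limit_universal[OF this] obtain u where
    u: "\<forall>v. continuous_map ?Z L v \<and> (\<forall>i\<in>I. \<forall>y\<in>topspace ?Z. q i (v y) = q i y)
            \<longrightarrow> (\<forall>y\<in>topspace ?Z. v y = u y)"
    by blast
  have "z = u z"
    using u[rule_format, of id] z(1) by (auto intro: continuous_map_from_subtopology)
  moreover have "z' = u z"
    using u[rule_format, of "\<lambda>_. z'"] z eq by auto
  ultimately show ?thesis by simp
qed

lemma exists_point_of_thread:
  assumes "thread x"
  shows "\<exists>z\<in>topspace L. \<forall>i\<in>I. q i z = x i"
proof -
  let ?Z = "discrete_topology {undefined} :: 'b topology"
  have "proj_cone I le X p ?Z (\<lambda>i _. x i)"
    using assms by (auto simp: proj_cone_def thread_def)
  from limit_universal[OF this] obtain u where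
    u: "continuous_map ?Z L u" "\<forall>i\<in>I. q i (u undefined) = x i"
    by auto
  then show ?thesis
    by (intro bexI[of _ "u undefined"]) (auto simp: continuous_map_def)
qed

definition cylinders :: "'b set set" where
  "cylinders = {{z \<in> topspace L. q i z \<in> V} | i V. i \<in> I \<and> openin (X i) V}"

text \<open>By the universal property, the identity is continuous from the initial topology of the
  projections to L.\<close>
lemma openin_limit_imp_generate_cylinders:
  assumes W: "openin L W"
  shows "generate_topology_on cylinders W"
proof -
  let ?Z = "topology_generated_by cylinders"
  obtain i where "i \<in> I" using index_nonempty by blast
  then have "topspace L \<in> cylinders"
    unfolding cylinders_def using proj_in_topspace
    by (intro CollectI exI[of _ i] exI[of _ "topspace (X i)"]) auto
  then have Z: "topspace ?Z = topspace L"
    by (auto simp: cylinders_def)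
  have "continuous_map ?Z (X i) (q i)" if "i \<in> I" for i
    unfolding continuous_map_def Z
  proof (intro conjI allI impI)
    show "q i \<in> topspace L \<rightarrow> topspace (X i)"
      using proj_in_topspace that by blast
    fix V assume "openin (X i) V"
    then have "{z \<in> topspace L. q i z \<in> V} \<in> cylinders"
      unfolding cylinders_def using that by blast
    then show "openin ?Z {z \<in> topspace L. q i z \<in> V}"
      by (simp add: openin_topology_generated_by_iff generate_topology_on.Basis)
  qed
  then have "proj_cone I le X p ?Z q"
    unfolding proj_cone_def Z using bond_proj by blast
  from limit_universal[OF this] obtain u where
    u: "continuous_map ?Z L u" "\<forall>i\<in>I. \<forall>z\<in>topspace L. q i (u z) = q i z"
    unfolding Z by blast
  have "u z = z" if "z \<in> topspace L" for z
    using u that Z continuous_map_image_subset_topspace[OF u(1)] by (intro proj_eqI) auto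
  then have "{z \<in> topspace ?Z. u z \<in> W} = W"
    using Z openin_subset[OF W] by auto
  moreover have "openin ?Z {z \<in> topspace ?Z. u z \<in> W}"
    using u(1) W by (simp add: continuous_map_def)
  ultimately show ?thesis
    by (simp add: openin_topology_generated_by_iff)
qed

lemma generate_cylinders_imp_cylinder_nhd:
  assumes "generate_topology_on cylinders W" "z \<in> W" "z \<in> topspace L"
  shows "\<exists>i\<in>I. \<exists>V. openin (X i) V \<and> q i z \<in> V \<and> {y \<in> topspace L. q i y \<in> V} \<subseteq> W"
  using assms
proof (induction arbitrary: z rule: generate_topology_on.induct)
  case Empty
  then show ?case by simp
next
  case (Int W1 W2)
  then obtain i V j V' where iV: "i \<in> I" "openin (X i) V" "q i z \<in> V" "{y \<in> topspace L. q i y \<in> V} \<subseteq> W1"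
    and jV': "j \<in> I" "openin (X j) V'" "q j z \<in> V'" "{y \<in> topspace L. q j y \<in> V'} \<subseteq> W2"
    by (meson IntD1 IntD2)
  obtain k where k: "k \<in> I" "le i k" "le j k"
    using directed[OF iV(1) jV'(1)] by blast
  define V'' where "V'' = {x \<in> topspace (X k). p i k x \<in> V} \<inter> {x \<in> topspace (X k). p j k x \<in> V'}"
  have "openin (X k) V''"
    unfolding V''_def
    using continuous_map_bond[OF iV(1) k(1,2)] continuous_map_bond[OF jV'(1) k(1,3)] iV(2) jV'(2)
    by (intro openin_Int) (auto simp: continuous_map_def)
  moreover have "q k z \<in> V''"
    unfolding V''_def using Int.prems(2) iV(1,3) jV'(1,3) k by (simp add: bond_proj proj_in_topspace)
  moreover have "{y \<in> topspace L. q k y \<in> V''} \<subseteq> W1 \<inter> W2"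
    unfolding V''_def using iV(1,4) jV'(1,4) k by (auto simp: bond_proj)
  ultimately show ?case
    using k(1) by blast
next
  case (UN K)
  then obtain W where "W \<in> K" "z \<in> W" by blast
  from UN.IH[OF this UN.prems(2)] obtain i V where
    "i \<in> I" "openin (X i) V" "q i z \<in> V" "{y \<in> topspace L. q i y \<in> V} \<subseteq> W"
    by blast
  with \<open>W \<in> K\<close> show ?case by blast
next
  case (Basis W)
  then show ?case by (auto simp: cylinders_def)
qed

lemma openin_limit_cylinder_nhd:
  assumes "openin L W" "z \<in> W"
  shows "\<exists>i\<in>I. \<exists>V. openin (X i) V \<and> q i z \<in> V \<and> {y \<in> topspace L. q i y \<in> V} \<subseteq> W"
  using assms openin_subset[OF assms(1)]
  by (intro generate_cylinders_imp_cylinder_nhd openin_limit_imp_generate_cylinders) auto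

lemma in_lims_limit_iff:
  assumes U: "eventually (\<lambda>z. z \<in> topspace L) U"
  shows "z \<in> lims L U \<longleftrightarrow> z \<in> topspace L \<and> (\<forall>i\<in>I. q i z \<in> lims (X i) (filtermap (q i) U))"
proof (intro iffI conjI ballI; (elim conjE)?)
  assume z: "z \<in> lims L U"
  then show "z \<in> topspace L"
    by (simp add: in_lims_iff)
  show "q i z \<in> lims (X i) (filtermap (q i) U)" if "i \<in> I" for i
    using lims_filtermap_continuous_map[OF continuous_map_proj[OF that] z] .
next
  assume z: "z \<in> topspace L" "\<forall>i\<in>I. q i z \<in> lims (X i) (filtermap (q i) U)"
  have "eventually (\<lambda>y. y \<in> W) U" if W: "openin L W" "z \<in> W" for W
  proof -
    obtain i V where iV: "i \<in> I" "openin (X i) V" "q i z \<in> V" "{y \<in> topspace L. q i y \<in> V} \<subseteq> W"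
      using openin_limit_cylinder_nhd[OF W] by blast
    then have "eventually (\<lambda>y. q i y \<in> V) U"
      using z(2) by (auto simp: in_lims_iff eventually_filtermap)
    with U show ?thesis
      by eventually_elim (use iV(4) in blast)
  qed
  with z(1) show "z \<in> lims L U"
    by (simp add: in_lims_iff)
qed

lemma spec_le_limit_iff:
  "spec_le L y z \<longleftrightarrow> y \<in> topspace L \<and> z \<in> topspace L \<and> coord_le (\<lambda>i. q i y) (\<lambda>i. q i z)"
proof (intro iffI conjI; (elim conjE)?)
  assume yz: "spec_le L y z"
  then show "y \<in> topspace L" "z \<in> topspace L"
    by (simp_all add: spec_le_def)
  show "coord_le (\<lambda>i. q i y) (\<lambda>i. q i z)"
    unfolding coord_le_def using spec_le_continuous_map[OF continuous_map_proj yz] by blast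
next
  assume y: "y \<in> topspace L" and z: "z \<in> topspace L" and yz: "coord_le (\<lambda>i. q i y) (\<lambda>i. q i z)"
  have "z \<in> W" if W: "openin L W" "y \<in> W" for W
  proof -
    obtain i V where iV: "i \<in> I" "openin (X i) V" "q i y \<in> V" "{x \<in> topspace L. q i x \<in> V} \<subseteq> W"
      using openin_limit_cylinder_nhd[OF W] by blast
    then have "q i z \<in> V"
      using yz spec_le_openin by (metis coord_le_def)
    with iV(4) z show ?thesis by blast
  qed
  with y z show "spec_le L y z"
    by (simp add: spec_le_def)
qed

lemma t0_space_limit:
  assumes "\<forall>i\<in>I. t0_space (X i)"
  shows "t0_space L"
  unfolding t0_space_iff_spec_le_antisym
proof (intro allI impI)
  fix y z assume "spec_le L y z" "spec_le L z y"
  then show "y = z"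
    using assms by (intro proj_eqI) (auto simp: spec_le_limit_iff coord_le_def t0_space_iff_spec_le_antisym)
qed

lemma lims_proj_down_lax_thread:
  assumes U: "eventually (\<lambda>z. z \<in> topspace L) U"
    and a: "\<forall>i\<in>I. a i \<in> topspace (X i) \<and> lims (X i) (filtermap (q i) U) = down (X i) (a i)"
  shows "lax_thread a"
  unfolding lax_thread_def
proof (intro conjI ballI impI)
  fix i j assume ij: "i \<in> I" "j \<in> I" "le i j"
  have "a j \<in> lims (X j) (filtermap (q j) U)"
    using a ij(2) spec_le_refl[of "a j" "X j"] by (simp add: down_def)
  then have "p i j (a j) \<in> lims (X i) (filtermap (p i j) (filtermap (q j) U))"
    by (rule lims_filtermap_continuous_map[OF continuous_map_bond[OF ij]])
  moreover have "filtermap (p i j) (filtermap (q j) U) = filtermap (q i) U"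
    unfolding filter_eq_iff eventually_filtermap
    using U by (auto intro!: eventually_subst elim!: eventually_mono simp: bond_proj ij)
  ultimately show "spec_le (X i) (p i j (a j)) (a i)"
    using a ij(1) by (simp add: down_def)
qed (use a in blast)

lemma exists_lims_proj_eq_down:
  assumes U: "ultrafilter_on (topspace L) U"
    and sober: "\<forall>i\<in>I. locally_strongly_sober (X i)"
    and conv: "lims L U \<noteq> {} \<or> (\<forall>i\<in>I. strongly_sober (X i))"
  shows "\<exists>a. \<forall>i\<in>I. a i \<in> topspace (X i) \<and> lims (X i) (filtermap (q i) U) = down (X i) (a i)"
proof -
  have UL: "eventually (\<lambda>z. z \<in> topspace L) U"
    using U by (simp add: ultrafilter_on_def)
  have "\<exists>a\<in>topspace (X i). lims (X i) (filtermap (q i) U) = down (X i) a" if i: "i \<in> I" for i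
  proof -
    have Ui: "ultrafilter_on (topspace (X i)) (filtermap (q i) U)"
      using U UL by (intro ultrafilter_on_filtermap) (auto elim: eventually_mono simp: proj_in_topspace i)
    show ?thesis
    proof (cases "lims L U = {}")
      case False
      then have "lims (X i) (filtermap (q i) U) \<noteq> {}"
        using in_lims_limit_iff[OF UL] i by blast
      then show ?thesis
        using sober i Ui unfolding locally_strongly_sober_def by blast
    next
      case True
      then show ?thesis
        using conv i Ui unfolding strongly_sober_def by blast
    qed
  qed
  then show ?thesis
    by metis
qed

lemma ultrafilter_lims_eq_down:
  assumes U: "ultrafilter_on (topspace L) U"
    and sober: "\<forall>i\<in>I. locally_strongly_sober (X i)"
    and conv: "lims L U \<noteq> {} \<or> (\<forall>i\<in>I. strongly_sober (X i))"
  shows "\<exists>!x. x \<in> topspace L \<and> lims L U = down L x"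
proof -
  have UL: "eventually (\<lambda>z. z \<in> topspace L) U"
    using U by (simp add: ultrafilter_on_def)
  obtain a where a: "\<forall>i\<in>I. a i \<in> topspace (X i) \<and> lims (X i) (filtermap (q i) U) = down (X i) (a i)"
    using exists_lims_proj_eq_down[OF U sober conv] by blast
  have lims_eq: "lims L U = {z \<in> topspace L. coord_le (\<lambda>i. q i z) a}"
    using a by (auto simp: in_lims_limit_iff[OF UL] coord_le_def down_def)
  define B where "B = (\<lambda>z i. q i z) ` lims L U"
  have B: "\<forall>b\<in>B. thread b \<and> coord_le b a"
    by (auto simp: B_def lims_eq thread_proj)
  have "has_filtered_infs_above (X i) ((\<lambda>b. b i) ` B)" if "i \<in> I" for i
  proof (cases "lims L U = {}")
    case False
    then show ?thesis
      using sober that by (intro locally_strongly_sober_has_filtered_infs_above) (auto simp: B_def)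
  next
    case True
    then show ?thesis
      using conv that by (intro strongly_sober_has_filtered_infs_above) auto
  qed
  moreover have "\<forall>i\<in>I. t0_space (X i)"
    using sober by (simp add: locally_strongly_sober_imp_t0_space)
  ultimately obtain m where m: "thread m" "coord_le m a" "\<forall>b\<in>B. coord_le b m"
    using exists_thread_between[OF _ lims_proj_down_lax_thread[OF UL a] B] by blast
  obtain x where x: "x \<in> topspace L" "\<forall>i\<in>I. q i x = m i"
    using exists_point_of_thread[OF m(1)] by blast
  have "lims L U = down L x"
    using x m(2,3) by (auto simp: B_def lims_eq down_def spec_le_limit_iff coord_le_def
        intro: spec_le_trans)
  moreover have "t0_space L"
    using sober by (simp add: t0_space_limit locally_strongly_sober_imp_t0_space)
  ultimately show ?thesis
    using x(1) by (metis t0_space_down_eqD)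
qed

end

theorem theorem5p1:
  fixes I :: "'i set" and le :: "'i \<Rightarrow> 'i \<Rightarrow> bool"
    and X :: "'i \<Rightarrow> 'a topology" and p :: "'i \<Rightarrow> 'i \<Rightarrow> 'a \<Rightarrow> 'a"
    and L :: "'b topology" and q :: "'i \<Rightarrow> 'b \<Rightarrow> 'a"
  assumes "projective_system I le X p"
    and "projective_limit I le X p L q"
  shows "((\<forall>i\<in>I. locally_strongly_sober (X i)) \<longrightarrow> locally_strongly_sober L) \<and>
         ((\<forall>i\<in>I. strongly_sober (X i)) \<longrightarrow> strongly_sober L)"
proof -
  interpret proj_limit I le X p L q
    using assms by unfold_locales
  show ?thesis
  proof (intro conjI impI)
    assume sober: "\<forall>i\<in>I. locally_strongly_sober (X i)"
    show "locally_strongly_sober L"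
      unfolding locally_strongly_sober_def
    proof (intro allI impI, elim conjE)
      fix U assume "ultrafilter_on (topspace L) U" "lims L U \<noteq> {}"
      with sober show "\<exists>!x. x \<in> topspace L \<and> lims L U = down L x"
        by (intro ultrafilter_lims_eq_down) auto
    qed
  next
    assume strong: "\<forall>i\<in>I. strongly_sober (X i)"
    then have sober: "\<forall>i\<in>I. locally_strongly_sober (X i)"
      by (simp add: strongly_sober_imp_locally_strongly_sober)
    show "strongly_sober L"
      unfolding strongly_sober_def
    proof (intro allI impI)
      fix U assume "ultrafilter_on (topspace L) U"
      with sober strong show "\<exists>!x. x \<in> topspace L \<and> lims L U = down L x"
        by (intro ultrafilter_lims_eq_down) auto
    qed
  qed
qed

end
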